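(* Let $n\geq 2$, $0<\lambda<1$, $h(x,y)=(\lambda x,\lambda y)$, and let $f:\mathbb{R}^2\to\mathbb{R}^2$ be an orientation preserving homeomorphism with bounded displacement, with $f(0,0)=(0,0)$ as its only fixed point, such that $hfh^{-1}=f^n$. Let $A=\mathbb{R}^2\setminus\{(0,0)\}$ and $\tilde A$ its universal cover. Then there exist lifts $F,H:\tilde A\to\tilde A$ of $f|_A$ and $h|_A$ respectively such that $HFH^{-1}=F^n$.
   Context: Bounded displacement: there is $K>0$ with $|f(p)-p|\leq K$ for all $p\in\mathbb{R}^2$. *)

theory Defs
  imports "HOL-Analysis.Analysis"
begin

text \<open>The plane R^2 is modelled as the complex numbers. The universal cover of
  A = C - {0} is modelled as C with covering map exp.\<close>

definition winds_once :: "(real \<Rightarrow> complex) \<Rightarrow> bool" where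
  "winds_once g \<longleftrightarrow> (\<exists>\<theta>. continuous_on {0..1} \<theta> \<and>
      (\<forall>t\<in>{0..1}. exp (\<theta> t) = g t) \<and> \<theta> 1 - \<theta> 0 = 2 * of_real pi * \<i>)"

text \<open>Orientation preserving homeomorphism of the plane: local degree +1 at every point,
  i.e. the image of every small positively oriented circle winds once around the image
  of its centre.\<close>
definition orientation_preserving_homeo :: "(complex \<Rightarrow> complex) \<Rightarrow> bool" where
  "orientation_preserving_homeo f \<longleftrightarrow>
     (\<exists>g. homeomorphism UNIV UNIV f g) \<and>
     (\<forall>p r. r > 0 \<longrightarrow>
        winds_once (\<lambda>t. f (p + of_real r * exp (2 * of_real pi * \<i> * of_real t)) - f p))"

definition is_lift :: "(complex \<Rightarrow> complex) \<Rightarrow> (complex \<Rightarrow> complex) \<Rightarrow> bool" where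
  "is_lift U u \<longleftrightarrow> continuous_on UNIV U \<and> (\<forall>w. exp (U w) = u (exp w))"

end

theory Submission
  imports Defs
begin

text \<open>Far from the origin f moves points by a bounded amount, hence by a relatively tiny
  amount, so one lift F of f is uniformly close to the identity on a right half-plane
  Re w > R. The lift H w = w + ln lam of h is a translation to the left. Both H F H^-1
  and F^n lift h f h^-1 = f^n, so they differ by a deck translation 2 pi i k; evaluating
  at a point far to the right, where both are close to the identity, forces k = 0.
  Only bounded displacement and f^-1(0) = {0} are needed.\<close>

lemma exp_eq_1_norm_less_2pi:
  fixes z :: complex
  assumes "exp z = 1" "norm z < 2 * pi"
  shows "z = 0"
proof -
  from assms(1) obtain m :: int where re: "Re z = 0" and im: "Im z = of_int (2*m) * pi"
    using exp_eq_1 by blast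
  have "norm z = \<bar>Im z\<bar>" using re by (simp add: cmod_def)
  also have "\<dots> = 2 * pi * \<bar>of_int m\<bar>" using im by (simp add: abs_mult)
  finally have "\<bar>real_of_int m\<bar> < 1" using assms(2) by simp
  then have "m = 0" by linarith
  then show ?thesis using re im by (simp add: complex_eq_iff)
qed

lemma exp_eq_1_imp_constant_on:
  fixes D :: "complex \<Rightarrow> complex"
  assumes S: "connected S" and cont: "continuous_on S D" and exp1: "\<And>z. z \<in> S \<Longrightarrow> exp (D z) = 1"
  shows "D constant_on S"
proof (rule continuous_discrete_range_constant[OF S cont])
  fix x assume x: "x \<in> S"
  show "\<exists>e>0. \<forall>y. y \<in> S \<and> D y \<noteq> D x \<longrightarrow> e \<le> norm (D y - D x)"
  proof (intro exI[of _ "2*pi"] conjI allI impI)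
    fix y assume y: "y \<in> S \<and> D y \<noteq> D x"
    then have "exp (D y - D x) = 1" using exp1 x by (simp add: exp_diff)
    with y show "2 * pi \<le> norm (D y - D x)"
      using exp_eq_1_norm_less_2pi by force
  qed simp
qed

lemma norm_Ln_add_one_le:
  fixes z :: complex
  assumes "norm z \<le> 1/2"
  shows "norm (Ln (1 + z)) \<le> 2 * norm z"
proof -
  have "norm (Ln (1 + z) - z) \<le> norm z^2 / (1 - norm z)"
    using Ln_approx_linear[of z] assms by simp
  also have "\<dots> \<le> norm z"
  proof -
    have "norm z ^ 2 \<le> norm z * (1 - norm z)" using assms
      by (simp add: power2_eq_square mult_left_mono)
    then show ?thesis using assms by (simp add: divide_le_eq)
  qed
  finally show ?thesis using norm_triangle_ineq2[of "Ln (1+z)" z] by linarith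
qed

lemma norm_minus_one_less_imp_notin_nonpos_Reals:
  fixes u :: complex
  assumes "norm (u - 1) < 1"
  shows "u \<notin> \<real>\<^sub>\<le>\<^sub>0"
  using assms abs_Re_le_cmod[of "u - 1"] by (auto simp: nonpos_Reals_def)

lemma is_lift_comp:
  assumes "is_lift U u" "is_lift V v"
  shows "is_lift (U \<circ> V) (u \<circ> v)"
  using assms unfolding is_lift_def comp_def
  by (metis continuous_on_compose2 subset_UNIV)

lemma is_lift_funpow:
  assumes "is_lift U u"
  shows "is_lift (U ^^ j) (u ^^ j)"
proof (induction j)
  case 0
  show ?case by (simp add: is_lift_def)
next
  case (Suc j)
  then show ?case using is_lift_comp[OF assms Suc.IH] by (simp only: funpow.simps)
qed

lemma is_lift_translation: "is_lift (\<lambda>w. w + L) (\<lambda>z. exp L * z)"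
  unfolding is_lift_def by (auto intro: continuous_intros simp: exp_add mult.commute)

lemma is_lift_unique_up_to_deck:
  assumes "is_lift U u" "is_lift V u"
  obtains c where "exp c = 1" "\<And>w. U w = V w + c"
proof -
  have eq: "exp (U w) = exp (V w)" for w using assms by (simp add: is_lift_def)
  then have exp1: "exp (U w - V w) = 1" for w by (simp add: exp_diff)
  have "continuous_on UNIV (\<lambda>w. U w - V w)"
    using assms by (simp add: is_lift_def continuous_on_diff)
  then have "(\<lambda>w. U w - V w) constant_on UNIV"
    using exp1 by (rule exp_eq_1_imp_constant_on[OF connected_UNIV])
  then obtain c where c: "\<And>w. U w - V w = c" unfolding constant_on_def by blast
  show ?thesis
  proof
    show "exp c = 1" using exp1 c by metis
    show "U w = V w + c" for w using c[of w] by (simp add: algebra_simps)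
  qed
qed

lemma exists_lift:
  assumes "continuous_on UNIV f" and "\<And>z. z \<noteq> 0 \<Longrightarrow> f z \<noteq> 0"
  obtains F where "is_lift F f"
proof -
  have "continuous_on UNIV (\<lambda>w. f (exp w))"
    by (rule continuous_on_compose2[OF assms(1)]) (auto intro: continuous_intros)
  then obtain F where "continuous_on UNIV F" "\<And>w. f (exp w) = exp (F w)"
    using continuous_logarithm_on_simply_connected[of UNIV "\<lambda>w. f (exp w)"] assms(2)
    by (auto simp: convex_imp_simply_connected locally_path_connected_UNIV)
  then show ?thesis using that[of F] by (simp add: is_lift_def)
qed

lemma is_lift_near_identity:
  fixes f :: "complex \<Rightarrow> complex" and K :: real
  assumes lift: "is_lift F f" and K: "0 < K" "\<And>z. norm (f z - z) \<le> K"
  obtains c where "exp c = 1"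
    "\<And>w. ln (2 * K) < Re w \<Longrightarrow> norm (F w - c - w) \<le> 2 * K / exp (Re w)"
proof -
  define S where "S = {w. ln (2 * K) < Re w}"
  define u where "u w = f (exp w) / exp w" for w
  have u_close: "norm (u w - 1) \<le> K / exp (Re w)" for w
  proof -
    have "u w - 1 = (f (exp w) - exp w) / exp w" unfolding u_def by (simp add: field_simps)
    then show ?thesis using K(2)[of "exp w"] by (simp add: norm_divide divide_right_mono)
  qed
  have u_half: "norm (u w - 1) < 1/2" if "w \<in> S" for w
  proof -
    have "exp (ln (2 * K)) < exp (Re w)" using that unfolding S_def by simp
    then have "K / exp (Re w) < K / exp (ln (2 * K))"
      using K(1) by (intro divide_strict_left_mono) auto
    moreover have "K / exp (ln (2 * K)) = 1/2" using K(1) by simp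
    ultimately show ?thesis using u_close[of w] by linarith
  qed
  have u_slit: "u w \<notin> \<real>\<^sub>\<le>\<^sub>0" if "w \<in> S" for w
    using u_half[OF that] by (intro norm_minus_one_less_imp_notin_nonpos_Reals) simp
  \<comment> \<open>On S both F and the principal branch w + Ln (u w) are logarithms of f (exp w).\<close>
  have exp_branch_diff: "exp (F w - w - Ln (u w)) = 1" if "w \<in> S" for w
  proof -
    have "exp (Ln (u w)) = u w" using u_slit[OF that] by (metis exp_Ln nonpos_Reals_zero_I)
    moreover have "f (exp w) = exp (F w)" using lift by (simp add: is_lift_def)
    ultimately show ?thesis by (simp add: exp_diff u_def)
  qed
  have "(\<lambda>w. F w - w - Ln (u w)) constant_on S"
  proof (rule exp_eq_1_imp_constant_on[OF _ _ exp_branch_diff])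
    show "connected S" unfolding S_def by (simp add: convex_connected convex_halfspace_Re_gt)
    have contF: "continuous_on UNIV F" using lift by (simp add: is_lift_def)
    moreover have "f (exp w) = exp (F w)" for w using lift by (simp add: is_lift_def)
    ultimately have "continuous_on S (\<lambda>w. f (exp w))" "continuous_on S F"
      by (auto intro: continuous_on_exp continuous_on_subset)
    then show "continuous_on S (\<lambda>w. F w - w - Ln (u w))"
      using u_slit unfolding u_def by (intro continuous_intros) auto
  qed
  then obtain c where c: "\<And>w. w \<in> S \<Longrightarrow> F w - w - Ln (u w) = c"
    unfolding constant_on_def by blast
  show ?thesis
  proof
    have "of_real (ln (2 * K) + 1) \<in> S" unfolding S_def by simp
    then show "exp c = 1" using c exp_branch_diff by metis
    fix w assume "ln (2 * K) < Re w"
    then have w: "w \<in> S" unfolding S_def by simp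
    then have "norm (u w - 1) \<le> 1/2" using u_half by fastforce
    then have "norm (Ln (u w)) \<le> 2 * norm (u w - 1)" using norm_Ln_add_one_le[of "u w - 1"] by simp
    moreover have "F w - c - w = Ln (u w)" using c[OF w] by (simp add: algebra_simps)
    ultimately show "norm (F w - c - w) \<le> 2 * K / exp (Re w)" using u_close[of w] by simp
  qed
qed

lemma exists_lift_tendsto_identity:
  fixes f :: "complex \<Rightarrow> complex"
  assumes "continuous_on UNIV f" and "\<And>z. z \<noteq> 0 \<Longrightarrow> f z \<noteq> 0"
    and "0 < K" and "\<And>z. norm (f z - z) \<le> K"
  obtains F where "is_lift F f" "\<And>\<delta>. 0 < \<delta> \<Longrightarrow> \<exists>R. \<forall>w. R < Re w \<longrightarrow> norm (F w - w) \<le> \<delta>"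
proof -
  obtain F where lift: "is_lift F f" using exists_lift assms(1,2) by blast
  obtain c where "exp c = 1"
    and near: "\<And>w. ln (2 * K) < Re w \<Longrightarrow> norm (F w - c - w) \<le> 2 * K / exp (Re w)"
    using is_lift_near_identity[OF lift assms(3,4)] by blast
  show ?thesis
  proof
    show "is_lift (\<lambda>w. F w - c) f"
      using lift \<open>exp c = 1\<close> by (simp add: is_lift_def continuous_on_diff exp_diff)
    fix \<delta> :: real assume "0 < \<delta>"
    show "\<exists>R. \<forall>w. R < Re w \<longrightarrow> norm (F w - c - w) \<le> \<delta>"
    proof (intro exI allI impI)
      fix w assume w: "max (ln (2 * K)) (ln (2 * K / \<delta>)) < Re w"
      then have "norm (F w - c - w) \<le> 2 * K / exp (Re w)" by (intro near) simp
      also have "\<dots> \<le> 2 * K / exp (ln (2 * K / \<delta>))"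
        using w assms(3) by (intro divide_left_mono) auto
      also have "\<dots> = \<delta>" using assms(3) \<open>0 < \<delta>\<close> by simp
      finally show "norm (F w - c - w) \<le> \<delta>" .
    qed
  qed
qed

lemma norm_funpow_minus_le:
  fixes F :: "complex \<Rightarrow> complex"
  assumes step: "\<And>w. R < Re w \<Longrightarrow> norm (F w - w) \<le> \<delta>" and "0 \<le> \<delta>"
    and "R + real j * \<delta> < Re w"
  shows "norm ((F ^^ j) w - w) \<le> real j * \<delta>"
  using assms(3)
proof (induction j)
  case 0
  show ?case by simp
next
  case (Suc j)
  have "R + real j * \<delta> < Re w" using Suc.prems \<open>0 \<le> \<delta>\<close> by (simp add: algebra_simps)
  then have IH: "norm ((F ^^ j) w - w) \<le> real j * \<delta>" by (rule Suc.IH)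
  have "Re w - Re ((F ^^ j) w) \<le> norm ((F ^^ j) w - w)"
    using abs_Re_le_cmod[of "(F ^^ j) w - w"] by simp
  then have "R < Re ((F ^^ j) w)" using IH Suc.prems \<open>0 \<le> \<delta>\<close> by (simp add: algebra_simps)
  then have "norm (F ((F ^^ j) w) - (F ^^ j) w) \<le> \<delta>" by (rule step)
  then show ?case
    using IH norm_triangle_ineq[of "F ((F ^^ j) w) - (F ^^ j) w" "(F ^^ j) w - w"]
    by (simp add: algebra_simps)
qed

lemma conjugated_lift_eq_funpow:
  fixes F :: "complex \<Rightarrow> complex"
  assumes lift: "is_lift F f"
    and conj: "\<And>z. exp L * f (z / exp L) = (f ^^ n) z" and left: "Re L \<le> 0"
    and near_id: "\<And>\<delta>. 0 < \<delta> \<Longrightarrow> \<exists>R. \<forall>w. R < Re w \<longrightarrow> norm (F w - w) \<le> \<delta>"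
  shows "F (w - L) + L = (F ^^ n) w"
proof -
  have "is_lift ((\<lambda>w. w + L) \<circ> F \<circ> (\<lambda>w. w + - L)) ((\<lambda>z. exp L * z) \<circ> f \<circ> (\<lambda>z. exp (- L) * z))"
    by (intro is_lift_comp is_lift_translation lift)
  moreover have "(\<lambda>z. exp L * f (z / exp L)) = f ^^ n" using conj by blast
  ultimately have "is_lift (\<lambda>w. F (w - L) + L) (f ^^ n)"
    by (simp add: comp_def exp_minus field_simps)
  then obtain c where "exp c = 1" and c: "\<And>w. F (w - L) + L = (F ^^ n) w + c"
    using is_lift_unique_up_to_deck[OF _ is_lift_funpow[OF lift]] by blast
  \<comment> \<open>Far to the right, c is a sum of n + 1 displacements of F, each at most \<delta>.\<close>
  define \<delta> :: real where "\<delta> = 1 / real (Suc n)"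
  have "0 < \<delta>" unfolding \<delta>_def by simp
  then obtain R where R: "\<And>w. R < Re w \<Longrightarrow> norm (F w - w) \<le> \<delta>" using near_id by blast
  define w1 where "w1 = complex_of_real (R + real n * \<delta> + 1)"
  have "0 \<le> real n * \<delta>" using \<open>0 < \<delta>\<close> by simp
  have step: "norm (F (w1 - L) - (w1 - L)) \<le> \<delta>"
    using left \<open>0 \<le> real n * \<delta>\<close> by (intro R) (simp add: w1_def)
  have iter: "norm ((F ^^ n) w1 - w1) \<le> real n * \<delta>"
    using norm_funpow_minus_le[OF R, where j = n and w = w1] \<open>0 < \<delta>\<close> by (simp add: w1_def)
  have "c = (F (w1 - L) - (w1 - L)) - ((F ^^ n) w1 - w1)"
    using c[of w1] by (simp add: algebra_simps)
  then have "norm c \<le> norm (F (w1 - L) - (w1 - L)) + norm ((F ^^ n) w1 - w1)"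
    by (metis norm_triangle_ineq4)
  also have "\<dots> \<le> real (Suc n) * \<delta>" using step iter by (simp add: algebra_simps)
  also have "\<dots> < 2 * pi" unfolding \<delta>_def using pi_gt3 by simp
  finally have "c = 0" using exp_eq_1_norm_less_2pi \<open>exp c = 1\<close> by blast
  then show ?thesis using c by simp
qed

theorem mainTheorem12:
  fixes f :: "complex \<Rightarrow> complex" and n :: nat and lam :: real
  assumes "n \<ge> 2"
    and "0 < lam" and "lam < 1"
    and "orientation_preserving_homeo f"
    and "\<exists>K>0. \<forall>p. norm (f p - p) \<le> K"
    and "f 0 = 0" and "\<forall>z. f z = z \<longrightarrow> z = 0"
    and "\<forall>z. of_real lam * f (z / of_real lam) = (f ^^ n) z"
  shows "\<exists>F H Hinv. is_lift F f \<and> is_lift H (\<lambda>z. of_real lam * z) \<and>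
            homeomorphism UNIV UNIV H Hinv \<and>
            (\<forall>w. H (F (Hinv w)) = (F ^^ n) w)"
proof -
  obtain g where hom: "homeomorphism UNIV UNIV f g"
    using assms(4) unfolding orientation_preserving_homeo_def by blast
  have "g (f z) = z" for z using hom by (simp add: homeomorphism_def)
  then have nonzero: "f z \<noteq> 0" if "z \<noteq> 0" for z using that assms(6) by metis
  obtain K where "0 < K" "\<And>p. norm (f p - p) \<le> K" using assms(5) by blast
  then obtain F where lift: "is_lift F f"
    and near_id: "\<And>\<delta>. 0 < \<delta> \<Longrightarrow> \<exists>R. \<forall>w. R < Re w \<longrightarrow> norm (F w - w) \<le> \<delta>"
    using exists_lift_tendsto_identity[OF homeomorphism_cont1[OF hom] nonzero] by blast
  define L where "L = complex_of_real (ln lam)"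
  have expL: "exp L = of_real lam" unfolding L_def using assms(2) by (simp add: exp_of_real)
  have commute: "F (w - L) + L = (F ^^ n) w" for w
  proof (rule conjugated_lift_eq_funpow[OF lift _ _ near_id])
    show "exp L * f (z / exp L) = (f ^^ n) z" for z using assms(8) expL by simp
    show "Re L \<le> 0" unfolding L_def using assms(2,3) by simp
  qed
  show ?thesis
  proof (intro exI conjI allI)
    show "is_lift (\<lambda>w. w + L) (\<lambda>z. of_real lam * z)"
      using is_lift_translation[of L] expL by simp
    show "homeomorphism UNIV UNIV (\<lambda>w. w + L) (\<lambda>w. w - L)"
      unfolding homeomorphism_def by (auto intro!: continuous_intros simp: image_iff)
    fix w show "F (w - L) + L = (F ^^ n) w" by (rule commute)
  qed (rule lift)
qed

end
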